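(* Let $X$ be a finite set with $N=|X|$ and $n=\binom N2$. Let $t,t'$ be two binary equidistant trees on taxa $X$ with different coarse types, and let $\Omega>\omega>0$ be such that $\max\{\eta(t),\eta(t')\}\le\Omega$ and $\min\{\nu(t),\nu(t')\}\ge\omega$. Then \[ d_\Delta(t,t')\ \ge\ \omega\Bigl(\bigl(3-2\tfrac{\Omega}{\omega}\bigr)n+\tfrac32 N-2\Bigr). \]
   Context: An equidistant tree $t$ on taxa $X$ is identified with the vector $(t_{ab})\in\mathbb{R}^n$ (coordinates indexed by unordered pairs of distinct taxa) of leaf-to-leaf path lengths; such vectors are exactly those for which, for all distinct $a,b,c$, $\max\{t_{ab},t_{ac},t_{bc}\}$ is attained at least twice. Trees are considered up to adding a multiple of $\mathbb{1}$. The depth of a node is its distance from the root. Let $M=\max_{a\ne b}t_{ab}$; the depth of the lowest common ancestor of leaves $a\ne b$ equals $(M-t_{ab})/2$. Define $\eta(t)$ = maximal depth of an internal node $=\frac12(M-\min_{a\neq b}t_{ab})$ and $\nu(t)$ = minimal depth of an internal node other than the root $=\frac12\min\{M-t_{ab}: t_{ab}<M\}$ ($+\infty$ if there is none). The coarse type of $t$ is the partition of $X$ into the leaf sets of the subtrees at the children of the root, i.e. distinct $a,b$ are in the same block iff $t_{ab}<M$. The tree is binary if every internal node has exactly two children, i.e. for all distinct $a,b,c$ the numbers $t_{ab},t_{ac},t_{bc}$ are not all equal. $d_{\Delta}(x,y)=\sum_{i=1}^n (y_i-x_i) + n\max_{i}(x_i-y_i)$. *)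

theory Defs
  imports Complex_Main "HOL-Library.Extended_Real"
begin

text \<open>Coordinates are indexed by unordered pairs of distinct taxa, i.e. 2-element subsets of X.
  A vector is a function from such pairs to the reals: t {a,b} = t_ab.\<close>

definition pairs :: "'a set \<Rightarrow> 'a set set" where
  "pairs X = {p. p \<subseteq> X \<and> card p = 2}"

definition equidistant :: "'a set \<Rightarrow> ('a set \<Rightarrow> real) \<Rightarrow> bool" where
  "equidistant X t \<longleftrightarrow>
     (\<forall>a\<in>X. \<forall>b\<in>X. \<forall>c\<in>X. a \<noteq> b \<and> a \<noteq> c \<and> b \<noteq> c \<longrightarrow>
        (let m = max (t {a,b}) (max (t {a,c}) (t {b,c})) in
          (t {a,b} = m \<and> t {a,c} = m) \<or> (t {a,b} = m \<and> t {b,c} = m) \<or> (t {a,c} = m \<and> t {b,c} = m)))"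

definition binary_tree :: "'a set \<Rightarrow> ('a set \<Rightarrow> real) \<Rightarrow> bool" where
  "binary_tree X t \<longleftrightarrow> equidistant X t \<and>
     (\<forall>a\<in>X. \<forall>b\<in>X. \<forall>c\<in>X. a \<noteq> b \<and> a \<noteq> c \<and> b \<noteq> c \<longrightarrow>
        \<not> (t {a,b} = t {a,c} \<and> t {a,c} = t {b,c}))"

definition maxdist :: "'a set \<Rightarrow> ('a set \<Rightarrow> real) \<Rightarrow> real" where
  "maxdist X t = Max (t ` pairs X)"

definition eta :: "'a set \<Rightarrow> ('a set \<Rightarrow> real) \<Rightarrow> real" where
  "eta X t = (maxdist X t - Min (t ` pairs X)) / 2"

definition nu :: "'a set \<Rightarrow> ('a set \<Rightarrow> real) \<Rightarrow> ereal" where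
  "nu X t = (if {p \<in> pairs X. t p < maxdist X t} = {} then \<infinity>
             else ereal (Min ((\<lambda>p. maxdist X t - t p) ` {p \<in> pairs X. t p < maxdist X t}) / 2))"

definition coarse_type :: "'a set \<Rightarrow> ('a set \<Rightarrow> real) \<Rightarrow> 'a set set" where
  "coarse_type X t = X // {(a,b). a \<in> X \<and> b \<in> X \<and> (a = b \<or> t {a,b} < maxdist X t)}"

definition d_Delta :: "'a set \<Rightarrow> ('a set \<Rightarrow> real) \<Rightarrow> ('a set \<Rightarrow> real) \<Rightarrow> real" where
  "d_Delta X x y = (\<Sum>p\<in>pairs X. y p - x p)
       + real (card (pairs X)) * Max ((\<lambda>p. x p - y p) ` pairs X)"

end

theory Submission
  imports Defs
begin

text \<open>Let \<open>M, M'\<close> be the maximal distances of \<open>t, t'\<close> and \<open>\<mu> = max\<^sub>p (t\<^sub>p - t'\<^sub>p)\<close>, so that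
  \<open>d\<^sub>\<Delta>(t, t') = \<Sum>\<^sub>p (\<mu> - t\<^sub>p + t'\<^sub>p)\<close>. Since the coarse types differ and \<open>t'\<close> is binary, some pair
  \<open>q\<close> is at distance \<open>M\<close> in \<open>t\<close> but below \<open>M'\<close> in \<open>t'\<close>, and the bound on \<open>\<nu>(t')\<close> gives
  \<open>\<mu> \<ge> M - M' + 2\<omega>\<close>. Distinguishing whether a pair is at maximal distance in \<open>t\<close> and in \<open>t'\<close>
  bounds every summand in terms of \<open>\<omega>\<close> and \<open>\<Omega>\<close>, and it remains to count the pairs at maximal
  distance. For an equidistant tree these include all pairs across a block of the coarse type
  and its complement; for a binary tree they are exactly these pairs. Hence there are at most
  \<open>N\<^sup>2/4\<close> of them in \<open>t\<close> and at least \<open>N - 1\<close> in \<open>t'\<close>.\<close>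

lemma pairsI: "a \<in> X \<Longrightarrow> b \<in> X \<Longrightarrow> a \<noteq> b \<Longrightarrow> {a,b} \<in> pairs X"
  by (simp add: pairs_def)

lemma pairsE:
  assumes "p \<in> pairs X"
  obtains a b where "a \<in> X" "b \<in> X" "a \<noteq> b" "p = {a,b}"
  using assms unfolding pairs_def by (auto simp: card_2_iff)

lemma finite_pairs: "finite X \<Longrightarrow> finite (pairs X)"
  unfolding pairs_def by (rule finite_subset[of _ "Pow X"]) auto

lemma card_pairs: "finite X \<Longrightarrow> card (pairs X) = card X choose 2"
  unfolding pairs_def using n_subsets by blast

lemma real_choose_two: "real (n choose 2) = real n * (real n - 1) / 2"
  by (induction n) (simp_all add: numeral_2_eq_2 field_simps)

lemma maxdist_ge: "finite X \<Longrightarrow> p \<in> pairs X \<Longrightarrow> t p \<le> maxdist X t"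
  unfolding maxdist_def by (rule Max_ge) (auto simp: finite_pairs)

lemma maxdist_attained:
  assumes "finite X" "pairs X \<noteq> {}"
  obtains a b where "a \<in> X" "b \<in> X" "a \<noteq> b" "t {a,b} = maxdist X t"
proof -
  have "maxdist X t \<in> t ` pairs X"
    unfolding maxdist_def using assms by (simp add: finite_pairs)
  then show thesis using that by (auto elim: pairsE)
qed

lemma equidistant_le_max:
  assumes "equidistant X t" "a \<in> X" "b \<in> X" "c \<in> X" "a \<noteq> b" "a \<noteq> c" "b \<noteq> c"
  shows "t {a,b} \<le> max (t {a,c}) (t {b,c})"
proof -
  have "let m = max (t {a,b}) (max (t {a,c}) (t {b,c})) in
          (t {a,b} = m \<and> t {a,c} = m) \<or> (t {a,b} = m \<and> t {b,c} = m) \<or> (t {a,c} = m \<and> t {b,c} = m)"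
    using assms unfolding equidistant_def by blast
  then show ?thesis unfolding Let_def by linarith
qed

lemma binary_tree_not_all_equal:
  assumes "binary_tree X t" "a \<in> X" "b \<in> X" "c \<in> X" "a \<noteq> b" "a \<noteq> c" "b \<noteq> c"
  shows "\<not> (t {a,b} = t {a,c} \<and> t {a,c} = t {b,c})"
  using assms unfolding binary_tree_def by blast

definition coarse_rel :: "'a set \<Rightarrow> ('a set \<Rightarrow> real) \<Rightarrow> ('a \<times> 'a) set" where
  "coarse_rel X t = {(a,b). a \<in> X \<and> b \<in> X \<and> (a = b \<or> t {a,b} < maxdist X t)}"

lemma coarse_type_eq: "coarse_type X t = X // coarse_rel X t"
  unfolding coarse_type_def coarse_rel_def ..

lemma equiv_coarse_rel:
  assumes "equidistant X t"
  shows "equiv X (coarse_rel X t)"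
proof (rule equivI)
  show "refl_on X (coarse_rel X t)"
    by (auto simp: refl_on_def coarse_rel_def)
  show "coarse_rel X t \<subseteq> X \<times> X"
    by (auto simp: coarse_rel_def)
  show "sym (coarse_rel X t)"
    by (auto simp: sym_def coarse_rel_def insert_commute)
  show "trans (coarse_rel X t)"
  proof (rule transI)
    fix a b c
    assume "(a,b) \<in> coarse_rel X t" "(b,c) \<in> coarse_rel X t"
    then show "(a,c) \<in> coarse_rel X t"
      using equidistant_le_max[OF assms, of a c b]
      by (cases "a = b \<or> b = c \<or> a = c") (auto simp: coarse_rel_def insert_commute)
  qed
qed

definition max_pairs :: "'a set \<Rightarrow> ('a set \<Rightarrow> real) \<Rightarrow> 'a set set" where
  "max_pairs X t = {p \<in> pairs X. t p = maxdist X t}"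

lemma max_pairs_subset_pairs: "max_pairs X t \<subseteq> pairs X"
  by (auto simp: max_pairs_def)

lemma doubleton_in_max_pairs_iff:
  assumes "finite X" "a \<in> X" "b \<in> X" "a \<noteq> b"
  shows "{a,b} \<in> max_pairs X t \<longleftrightarrow> (a,b) \<notin> coarse_rel X t"
  using maxdist_ge[OF assms(1) pairsI[OF assms(2-4)], of t] assms(2-4)
  by (auto simp: max_pairs_def coarse_rel_def pairsI)

lemma inj_on_doubleton_Times: "A \<inter> B = {} \<Longrightarrow> inj_on (\<lambda>(x,y). {x,y}) (A \<times> B)"
  by (auto simp: inj_on_def doubleton_eq_iff)

lemma doubletons_across_block_subset_max_pairs:
  assumes "finite X" "equidistant X t" "u \<in> X"
  defines "A \<equiv> coarse_rel X t `` {u}"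
  shows "(\<lambda>(x,y). {x,y}) ` (A \<times> (X - A)) \<subseteq> max_pairs X t"
proof clarify
  fix x y
  assume x: "x \<in> A" and y: "y \<in> X" "y \<notin> A"
  have R: "equiv X (coarse_rel X t)" using assms(2) by (rule equiv_coarse_rel)
  have "x \<in> X" "x \<noteq> y" using x y by (auto simp: A_def coarse_rel_def)
  moreover have "(x,y) \<notin> coarse_rel X t"
    using x y R unfolding A_def by (meson Image_singleton_iff equivE transD)
  ultimately show "{x,y} \<in> max_pairs X t"
    using doubleton_in_max_pairs_iff[OF assms(1)] y by blast
qed

lemma max_pairs_subset_doubletons_across_block:
  assumes "finite X" "binary_tree X t" "u \<in> X"
  defines "A \<equiv> coarse_rel X t `` {u}"
  shows "max_pairs X t \<subseteq> (\<lambda>(x,y). {x,y}) ` (A \<times> (X - A))"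
proof
  fix p
  assume p: "p \<in> max_pairs X t"
  then obtain x y where xy: "x \<in> X" "y \<in> X" "x \<noteq> y" "p = {x,y}"
    by (auto simp: max_pairs_def elim: pairsE)
  have R: "equiv X (coarse_rel X t)"
    using assms(2) by (simp add: binary_tree_def equiv_coarse_rel)
  have not_xy: "(x,y) \<notin> coarse_rel X t"
    using doubleton_in_max_pairs_iff[OF assms(1) xy(1-3)] p xy(4) by blast
  have "\<not> (x \<in> A \<and> y \<in> A)"
    using not_xy R unfolding A_def by (meson Image_singleton_iff equivE symD transD)
  moreover have "x \<in> A \<or> y \<in> A"
  proof (rule ccontr)
    assume "\<not> (x \<in> A \<or> y \<in> A)"
    then have "x \<noteq> u" "y \<noteq> u" "{u,x} \<in> max_pairs X t" "{u,y} \<in> max_pairs X t"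
      using R assms(3) xy doubleton_in_max_pairs_iff[OF assms(1)]
      by (auto simp: A_def dest: equiv_class_self)
    then show False
      using binary_tree_not_all_equal[OF assms(2,3) xy(1,2)] xy p
      by (auto simp: max_pairs_def)
  qed
  ultimately have "(x,y) \<in> A \<times> (X - A) \<or> (y,x) \<in> A \<times> (X - A)"
    using xy by blast
  then show "p \<in> (\<lambda>(x,y). {x,y}) ` (A \<times> (X - A))"
    using xy(4) by (auto simp: insert_commute)
qed

lemma card_doubletons_across_block:
  assumes "finite X" "A \<subseteq> X"
  shows "card ((\<lambda>(x,y). {x,y}) ` (A \<times> (X - A))) = card A * card (X - A)"
  by (simp add: card_image inj_on_doubleton_Times card_cartesian_product)

lemma card_add_card_Diff: "finite X \<Longrightarrow> A \<subseteq> X \<Longrightarrow> card A + card (X - A) = card X"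
  by (metis card_Diff_subset card_mono finite_subset le_add_diff_inverse)

lemma coarse_rel_Image_subset: "coarse_rel X t `` {u} \<subseteq> X"
  by (auto simp: coarse_rel_def)

lemma card_block_mult_card_complement_le_card_max_pairs:
  assumes "finite X" "equidistant X t" "u \<in> X"
  defines "A \<equiv> coarse_rel X t `` {u}"
  shows "card A * card (X - A) \<le> card (max_pairs X t)"
proof -
  have "card A * card (X - A) = card ((\<lambda>(x,y). {x,y}) ` (A \<times> (X - A)))"
    using card_doubletons_across_block[OF assms(1) coarse_rel_Image_subset] by (simp add: A_def)
  also have "\<dots> \<le> card (max_pairs X t)"
    using doubletons_across_block_subset_max_pairs[OF assms(1-3)]
      finite_subset[OF max_pairs_subset_pairs finite_pairs[OF assms(1)]]
    by (intro card_mono) (simp_all add: A_def)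
  finally show ?thesis .
qed

lemma card_max_pairs_le_card_block_mult_card_complement:
  assumes "finite X" "binary_tree X t" "u \<in> X"
  defines "A \<equiv> coarse_rel X t `` {u}"
  shows "card (max_pairs X t) \<le> card A * card (X - A)"
proof -
  have "finite A" using finite_subset[OF coarse_rel_Image_subset assms(1)] by (simp add: A_def)
  then have "card (max_pairs X t) \<le> card ((\<lambda>(x,y). {x,y}) ` (A \<times> (X - A)))"
    using max_pairs_subset_doubletons_across_block[OF assms(1-3)] assms(1)
    by (intro card_mono) (simp_all add: A_def)
  also have "\<dots> = card A * card (X - A)"
    using card_doubletons_across_block[OF assms(1) coarse_rel_Image_subset] by (simp add: A_def)
  finally show ?thesis .
qed

lemma card_le_card_max_pairs_plus_one:
  assumes "finite X" "equidistant X t" "pairs X \<noteq> {}"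
  shows "card X \<le> card (max_pairs X t) + 1"
proof -
  obtain u v where uv: "u \<in> X" "v \<in> X" "u \<noteq> v" "t {u,v} = maxdist X t"
    using maxdist_attained[OF assms(1,3)] .
  define A where "A = coarse_rel X t `` {u}"
  have "u \<in> A" "v \<in> X - A"
    using uv by (auto simp: A_def coarse_rel_def)
  then have "1 \<le> card A" "1 \<le> card (X - A)"
    using finite_subset[OF coarse_rel_Image_subset assms(1)] assms(1)
    by (auto simp: A_def Suc_le_eq card_gt_0_iff)
  moreover have "a + b \<le> a * b + 1" if "1 \<le> a" "1 \<le> b" for a b :: nat
    using that by (cases a; cases b) simp_all
  ultimately have "card A + card (X - A) \<le> card A * card (X - A) + 1"
    by blast
  then show ?thesis
    using card_add_card_Diff[OF assms(1) coarse_rel_Image_subset, of t u]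
      card_block_mult_card_complement_le_card_max_pairs[OF assms(1,2) uv(1)]
    unfolding A_def by linarith
qed

lemma card_max_pairs_le_quarter_square:
  assumes "finite X" "binary_tree X t"
  shows "4 * real (card (max_pairs X t)) \<le> real (card X) ^ 2"
proof (cases "X = {}")
  case True
  then show ?thesis by (simp add: max_pairs_def pairs_def)
next
  case False
  then obtain u where u: "u \<in> X" by blast
  define a b where "a = real (card (coarse_rel X t `` {u}))"
    and "b = real (card (X - coarse_rel X t `` {u}))"
  have "4 * real (card (max_pairs X t)) \<le> 4 * (a * b)"
    using card_max_pairs_le_card_block_mult_card_complement[OF assms u]
    unfolding a_def b_def by (simp flip: of_nat_mult)
  also have "\<dots> \<le> (a + b) ^ 2"
    using zero_le_power2[of "a - b"] by (simp add: power2_eq_square algebra_simps)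
  also have "a + b = real (card X)"
    using card_add_card_Diff[OF assms(1) coarse_rel_Image_subset]
    unfolding a_def b_def by (metis of_nat_add)
  finally show ?thesis .
qed

lemma nu_le_half_gap:
  assumes "finite X" "p \<in> pairs X" "t p < maxdist X t"
  shows "nu X t \<le> ereal ((maxdist X t - t p) / 2)"
proof -
  let ?S = "{p \<in> pairs X. t p < maxdist X t}"
  have "?S \<noteq> {}" using assms(2,3) by blast
  moreover have "Min ((\<lambda>p. maxdist X t - t p) ` ?S) \<le> maxdist X t - t p"
    using assms by (intro Min_le) (auto simp: finite_pairs)
  ultimately show ?thesis
    unfolding nu_def by simp
qed

lemma half_gap_le_eta:
  assumes "finite X" "p \<in> pairs X"
  shows "(maxdist X t - t p) / 2 \<le> eta X t"
proof -
  have "Min (t ` pairs X) \<le> t p"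
    using assms by (intro Min_le) (auto simp: finite_pairs)
  then show ?thesis unfolding eta_def by simp
qed

lemma binary_tree_every_leaf_near_max_pair:
  assumes "finite X" "binary_tree X t" "a \<in> X" "b \<in> X" "a \<noteq> b" "t {a,b} = maxdist X t" "x \<in> X"
  shows "(x,a) \<in> coarse_rel X t \<or> (x,b) \<in> coarse_rel X t"
proof (cases "x = a \<or> x = b")
  case True
  then show ?thesis using assms(3,4) by (auto simp: coarse_rel_def)
next
  case False
  then have "\<not> (t {a,b} = t {a,x} \<and> t {a,x} = t {b,x})"
    using binary_tree_not_all_equal[OF assms(2-4,7,5)] by blast
  moreover have "t {a,x} \<le> maxdist X t" "t {b,x} \<le> maxdist X t"
    using False assms by (auto intro: maxdist_ge pairsI)
  ultimately have "t {a,x} < maxdist X t \<or> t {b,x} < maxdist X t"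
    using assms(6) by linarith
  moreover have "{x,a} = {a,x}" "{x,b} = {b,x}" by blast+
  ultimately show ?thesis
    using assms(3,4,7) unfolding coarse_rel_def by auto
qed

lemma coarse_rel_eq_if_refines:
  assumes fin: "finite X" and "equidistant X t" "binary_tree X t'"
    and refines: "coarse_rel X t' \<subseteq> coarse_rel X t"
  shows "coarse_rel X t = coarse_rel X t'"
proof
  have "equiv X (coarse_rel X t)" using assms(2) by (rule equiv_coarse_rel)
  then have sym: "sym (coarse_rel X t)" and trans: "trans (coarse_rel X t)"
    by (simp_all add: equiv_def)
  show "coarse_rel X t \<subseteq> coarse_rel X t'"
  proof (rule subrelI, rule ccontr)
    fix a b
    assume ab: "(a,b) \<in> coarse_rel X t" "(a,b) \<notin> coarse_rel X t'"
    then have ab': "a \<in> X" "b \<in> X" "a \<noteq> b" "\<not> t' {a,b} < maxdist X t'"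
      by (auto simp: coarse_rel_def)
    then have "t' {a,b} = maxdist X t'"
      using maxdist_ge[OF fin pairsI[OF ab'(1-3)], of t'] by linarith
    then have near: "(x,a) \<in> coarse_rel X t \<or> (x,b) \<in> coarse_rel X t" if "x \<in> X" for x
      using binary_tree_every_leaf_near_max_pair[OF fin assms(3) ab'(1-3)] that refines by blast
    have block_ab: "(c,d) \<in> coarse_rel X t" if "c \<in> {a,b}" "d \<in> {a,b}" for c d
    proof -
      have "(a,a) \<in> coarse_rel X t" "(b,b) \<in> coarse_rel X t"
        using ab'(1,2) by (simp_all add: coarse_rel_def)
      moreover have "(b,a) \<in> coarse_rel X t"
        using symD[OF sym ab(1)] .
      ultimately show ?thesis using that ab(1) by auto
    qed
    \<comment> \<open>Every leaf shares a \<open>t\<close>-block with \<open>a\<close> or \<open>b\<close>, and these two share one, so all of \<open>X\<close> is one block.\<close>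
    obtain u v where uv: "u \<in> X" "v \<in> X" "u \<noteq> v" "t {u,v} = maxdist X t"
      using maxdist_attained[OF fin] pairsI[OF ab'(1-3)] by blast
    obtain c where c: "c \<in> {a,b}" "(u,c) \<in> coarse_rel X t"
      using near[OF uv(1)] by blast
    obtain d where d: "d \<in> {a,b}" "(v,d) \<in> coarse_rel X t"
      using near[OF uv(2)] by blast
    have "(u,d) \<in> coarse_rel X t"
      using transD[OF trans c(2) block_ab[OF c(1) d(1)]] .
    then have "(u,v) \<in> coarse_rel X t"
      using transD[OF trans _ symD[OF sym d(2)]] by blast
    with uv show False by (simp add: coarse_rel_def)
  qed
qed (rule refines)

lemma coarse_type_neq_obtains_separated_pair:
  assumes "finite X" "equidistant X t" "binary_tree X t'" "coarse_type X t \<noteq> coarse_type X t'"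
  obtains q where "q \<in> pairs X" "t q = maxdist X t" "t' q < maxdist X t'"
proof -
  have "\<not> coarse_rel X t' \<subseteq> coarse_rel X t"
    using coarse_rel_eq_if_refines[OF assms(1-3)] assms(4) by (metis coarse_type_eq)
  then obtain a b where "(a,b) \<in> coarse_rel X t'" "(a,b) \<notin> coarse_rel X t"
    by auto
  then have ab: "a \<in> X" "b \<in> X" "a \<noteq> b" "t' {a,b} < maxdist X t'" "\<not> t {a,b} < maxdist X t"
    by (auto simp: coarse_rel_def)
  show thesis
  proof (rule that)
    show "{a,b} \<in> pairs X" using ab(1-3) by (rule pairsI)
    show "t {a,b} = maxdist X t"
      using maxdist_ge[OF assms(1) pairsI[OF ab(1-3)], of t] ab(5) by linarith
  qed (fact ab(4))
qed

lemma d_Delta_eq_sum: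
  "d_Delta X x y = (\<Sum>p\<in>pairs X. Max ((\<lambda>p. x p - y p) ` pairs X) - (x p - y p))"
  unfolding d_Delta_def by (simp add: sum_subtractf)

lemma summand_lower_bound:
  fixes s s' M M' \<mu> \<omega> \<Omega> :: real
  assumes "s \<le> M" "s' \<le> M'" "s - s' \<le> \<mu>" "M - M' + 2 * \<omega> \<le> \<mu>"
    and "s < M \<Longrightarrow> 2 * \<omega> \<le> M - s" "(M' - s') / 2 \<le> \<Omega>" "\<omega> \<le> \<Omega>"
  shows "(4 * \<omega> - 2 * \<Omega>) - 2 * \<omega> * of_bool (s = M) + 2 * \<omega> * of_bool (s' = M') \<le> \<mu> - (s - s')"
  using assms by (cases "s = M"; cases "s' = M'") auto

lemma d_Delta_ge_max_pair_counts:
  fixes \<omega> \<Omega> :: real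
  assumes fin: "finite X" and "\<omega> \<le> \<Omega>"
    and q: "q \<in> pairs X" "t q = maxdist X t" "t' q < maxdist X t'"
    and nu: "ereal \<omega> \<le> nu X t" "ereal \<omega> \<le> nu X t'" and eta_t': "eta X t' \<le> \<Omega>"
  shows "real (card (pairs X)) * (4 * \<omega> - 2 * \<Omega>)
           - 2 * \<omega> * real (card (max_pairs X t)) + 2 * \<omega> * real (card (max_pairs X t'))
         \<le> d_Delta X t t'"
proof -
  define \<mu> where "\<mu> = Max ((\<lambda>p. t p - t' p) ` pairs X)"
  have \<mu>_ge: "t p - t' p \<le> \<mu>" if "p \<in> pairs X" for p
    unfolding \<mu>_def using fin that by (intro Max_ge) (auto simp: finite_pairs)
  have gap: "2 * \<omega> \<le> maxdist X s - s p"
    if "ereal \<omega> \<le> nu X s" "p \<in> pairs X" "s p < maxdist X s" for s p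
    using order_trans[OF that(1) nu_le_half_gap[OF fin that(2,3)]] by simp
  have "maxdist X t - maxdist X t' + 2 * \<omega> \<le> \<mu>"
    using \<mu>_ge[OF q(1)] q(2) gap[OF nu(2) q(1,3)] by linarith
  then have summand:
    "(4 * \<omega> - 2 * \<Omega>) - 2 * \<omega> * of_bool (p \<in> max_pairs X t) + 2 * \<omega> * of_bool (p \<in> max_pairs X t')
       \<le> \<mu> - (t p - t' p)" if p: "p \<in> pairs X" for p
    using summand_lower_bound[OF maxdist_ge[OF fin p] maxdist_ge[OF fin p] \<mu>_ge[OF p] _
        gap[OF nu(1) p] order_trans[OF half_gap_le_eta[OF fin p] eta_t'] \<open>\<omega> \<le> \<Omega>\<close>] p
    by (simp add: max_pairs_def)
  have "real (card (pairs X)) * (4 * \<omega> - 2 * \<Omega>)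
          - 2 * \<omega> * real (card (max_pairs X t)) + 2 * \<omega> * real (card (max_pairs X t'))
        = (\<Sum>p\<in>pairs X. (4 * \<omega> - 2 * \<Omega>) - 2 * \<omega> * of_bool (p \<in> max_pairs X t)
                          + 2 * \<omega> * of_bool (p \<in> max_pairs X t'))"
    using fin max_pairs_subset_pairs[of X t] max_pairs_subset_pairs[of X t']
    by (simp add: sum.distrib sum_subtractf finite_pairs Int_absorb1 flip: sum_distrib_left)
  also have "\<dots> \<le> (\<Sum>p\<in>pairs X. \<mu> - (t p - t' p))"
    by (rule sum_mono) (rule summand)
  also have "\<dots> = d_Delta X t t'"
    unfolding d_Delta_eq_sum \<mu>_def ..
  finally show ?thesis .
qed

theorem mainTheorem6:
  fixes X :: "'a set" and t t' :: "'a set \<Rightarrow> real" and \<omega> \<Omega> :: real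
  assumes "finite X"
    and "binary_tree X t" and "binary_tree X t'"
    and "coarse_type X t \<noteq> coarse_type X t'"
    and "0 < \<omega>" and "\<omega> < \<Omega>"
    and "max (eta X t) (eta X t') \<le> \<Omega>"
    and "ereal \<omega> \<le> min (nu X t) (nu X t')"
  shows "d_Delta X t t' \<ge>
    \<omega> * ((3 - 2 * (\<Omega> / \<omega>)) * real (card X choose 2) + 3 / 2 * real (card X) - 2)"
proof -
  let ?N = "real (card X)" and ?n = "real (card X choose 2)"
  let ?C = "real (card (max_pairs X t))" and ?C' = "real (card (max_pairs X t'))"
  have equi: "equidistant X t" "equidistant X t'"
    using assms(2,3) by (simp_all add: binary_tree_def)
  obtain q where q: "q \<in> pairs X" "t q = maxdist X t" "t' q < maxdist X t'"
    using coarse_type_neq_obtains_separated_pair[OF assms(1) equi(1) assms(3,4)] .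
  have "?N \<le> ?C' + 1"
    using card_le_card_max_pairs_plus_one[OF assms(1) equi(2)] q(1) by fastforce
  moreover have "4 * ?C \<le> ?N ^ 2"
    using card_max_pairs_le_quarter_square[OF assms(1,2)] .
  ultimately have counts: "3 / 2 * ?N - 2 \<le> ?n - 2 * ?C + 2 * ?C'"
    unfolding real_choose_two power2_eq_square right_diff_distrib mult_1_right diff_divide_distrib
    by linarith
  have "\<omega> * ((3 - 2 * (\<Omega> / \<omega>)) * ?n + 3 / 2 * ?N - 2)
      = ?n * (4 * \<omega> - 2 * \<Omega>) + \<omega> * (3 / 2 * ?N - 2) - \<omega> * ?n"
    using assms(5) by (simp add: field_simps)
  also have "\<dots> \<le> ?n * (4 * \<omega> - 2 * \<Omega>) + \<omega> * (?n - 2 * ?C + 2 * ?C') - \<omega> * ?n"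
    using mult_left_mono[OF counts] assms(5) by simp
  also have "\<dots> = ?n * (4 * \<omega> - 2 * \<Omega>) - 2 * \<omega> * ?C + 2 * \<omega> * ?C'"
    by (simp add: algebra_simps)
  also have "\<dots> \<le> d_Delta X t t'"
    using d_Delta_ge_max_pair_counts[OF assms(1) _ q] assms(6-8) card_pairs[OF assms(1)] by simp
  finally show ?thesis .
qed

end
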